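(* Let $Q^-=(-1,0)\times(-1,1)$, $Q^+=(0,1)\times(-1,1)$. Let $g:(-1,1)^2\to\mathbb{R}^2$ satisfy: (a) $g|_{Q^\pm}=P^\pm$ for polynomial maps $P^\pm:\mathbb{R}^2\to\mathbb{R}^2$ of degree at most two; (b) $g\in C^1((-1,1)^2;\mathbb{R}^2)$ (so $g$ is $C^1$ across the interface $\{0\}\times(-1,1)$); (c) $\det Dg\geq\lambda>0$ on $Q^-\cup Q^+$. Fix $\eta\in C^\infty(\mathbb{R})$ with $\eta(t)=0$ for $t\leq-1$ and $\eta(t)=1$ for $t\geq1$, set $\eta_\varepsilon(t)=\eta(t/\varepsilon)$, and for $0<\varepsilon<1$ define on $Q^-\cup Q^+$ \[ g_\varepsilon(x)=\begin{cases}P^-(x)+\eta_\varepsilon(x_1)\bigl(P^+(x)-P^-(x)\bigr), & |x_1|<\varepsilon,\\ g(x), & |x_1|\geq\varepsilon.\end{cases} \] Then: (i) $g_\varepsilon\in C^\infty(Q^-\cup Q^+)$; (ii) $g_\varepsilon=g$ on $\{|x_1|\geq\varepsilon\}$; (iii) $g_\varepsilon\to g$ in $W^{2,1}(Q^-\cup Q^+)$ as $\varepsilon\downarrow0$; (iv) there is a constant $C$ independent of $\varepsilon$ with $\|Dg_\varepsilon-Dg\|_{L^\infty(Q^-\cup Q^+)}\leq C\varepsilon$; (v) $\det Dg_\varepsilon\geq\lambda/2$ on $Q^-\cup Q^+$ for all sufficiently small $\varepsilon$. *)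

theory Defs
  imports "HOL-Analysis.Analysis"
begin

definition Qminus :: "(real \<times> real) set" where
  "Qminus = {-1<..<0} \<times> {-1<..<1}"

definition Qplus :: "(real \<times> real) set" where
  "Qplus = {0<..<1} \<times> {-1<..<1}"

definition Square :: "(real \<times> real) set" where
  "Square = {-1<..<1} \<times> {-1<..<1}"

definition dd :: "'a::real_normed_vector \<Rightarrow> ('a \<Rightarrow> 'b::real_normed_vector) \<Rightarrow> 'a \<Rightarrow> 'b" where
  "dd v f x = frechet_derivative f (at x) v"

primrec Ck :: "nat \<Rightarrow> 'a::real_normed_vector set \<Rightarrow> ('a \<Rightarrow> 'b::real_normed_vector) \<Rightarrow> bool" where
  "Ck 0 S f = continuous_on S f"
| "Ck (Suc n) S f = (f differentiable_on S \<and> (\<forall>v. Ck n S (\<lambda>x. frechet_derivative f (at x) v)))"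

definition smooth_on :: "'a::real_normed_vector set \<Rightarrow> ('a \<Rightarrow> 'b::real_normed_vector) \<Rightarrow> bool" where
  "smooth_on S f \<longleftrightarrow> (\<forall>n. Ck n S f)"

definition poly_map_deg2 :: "(real \<times> real \<Rightarrow> real \<times> real) \<Rightarrow> bool" where
  "poly_map_deg2 P \<longleftrightarrow> (\<exists>c :: nat \<Rightarrow> nat \<Rightarrow> real \<times> real.
      P = (\<lambda>x. \<Sum>j\<le>2. \<Sum>k\<le>2 - j. (fst x ^ j * snd x ^ k) *\<^sub>R c j k))"

definition jdet :: "(real \<times> real \<Rightarrow> real \<times> real) \<Rightarrow> real" where
  "jdet L = fst (L (1,0)) * snd (L (0,1)) - snd (L (1,0)) * fst (L (0,1))"

text \<open>\<open>W^{2,1}(U)\<close> distance via classical derivatives of order \<open>\<le> 2\<close>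
  (valid for functions smooth on the open set U).\<close>
definition W21_dist :: "'a::euclidean_space set \<Rightarrow> ('a \<Rightarrow> 'b::real_normed_vector) \<Rightarrow> ('a \<Rightarrow> 'b) \<Rightarrow> ennreal" where
  "W21_dist U f h = (\<integral>\<^sup>+ x\<in>U. ennreal
      (norm (f x - h x)
       + (\<Sum>i\<in>Basis. norm (dd i (\<lambda>y. f y - h y) x))
       + (\<Sum>i\<in>Basis. \<Sum>j\<in>Basis. norm (dd j (dd i (\<lambda>y. f y - h y)) x))) \<partial>lborel)"

definition g_eps :: "(real \<Rightarrow> real) \<Rightarrow> (real \<times> real \<Rightarrow> real \<times> real) \<Rightarrow> (real \<times> real \<Rightarrow> real \<times> real)
    \<Rightarrow> (real \<times> real \<Rightarrow> real \<times> real) \<Rightarrow> real \<Rightarrow> real \<times> real \<Rightarrow> real \<times> real" where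
  "g_eps \<eta> Pm Pp g \<epsilon> x =
     (if \<bar>fst x\<bar> < \<epsilon> then Pm x + \<eta> (fst x / \<epsilon>) *\<^sub>R (Pp x - Pm x) else g x)"

end

theory Submission
  imports Defs
begin

text \<open>Since \<open>g\<close> is \<open>C\<^sup>1\<close> across the interface \<open>x\<^sub>1 = 0\<close>, the quadratic maps \<open>P\<^sup>+\<close> and \<open>P\<^sup>-\<close>
  agree there to first order, so \<open>P\<^sup>+ - P\<^sup>- = x\<^sub>1\<^sup>2 b\<close> for a constant vector \<open>b\<close>. Hence
  \<open>g\<^sub>\<epsilon> - g = \<epsilon>\<^sup>2 \<psi>\<^sub>c(x\<^sub>1/\<epsilon>) b\<close> with \<open>\<psi>\<^sub>c(t) = (\<eta>(t) - c) t\<^sup>2\<close>, where \<open>c = 0\<close> on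
  \<open>Q\<^sup>-\<close> and \<open>c = 1\<close> on \<open>Q\<^sup>+\<close>; this correction is smooth on each half and vanishes for
  \<open>|x\<^sub>1| \<ge> \<epsilon>\<close>. Its \<open>k\<close>-th derivatives are \<open>\<epsilon>\<^sup>2\<^sup>-\<^sup>k \<psi>\<^sub>c\<^sup>(\<^sup>k\<^sup>)(x\<^sub>1/\<epsilon>) b\<close> (in the
  \<open>x\<^sub>1\<close>-direction only), and \<open>\<psi>\<^sub>c, \<psi>\<^sub>c', \<psi>\<^sub>c''\<close> are bounded on \<open>[-1, 1]\<close>. So \<open>Dg\<^sub>\<epsilon> - Dg = O(\<epsilon>)\<close>
  uniformly, which perturbs \<open>det Dg\<close> by \<open>O(\<epsilon>)\<close>, and the \<open>W\<^sup>2\<^sup>,\<^sup>1\<close> integrand is bounded by a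
  constant on a strip of area \<open>4\<epsilon>\<close>.\<close>

section \<open>Iterated differentiability\<close>

lemma Ck_SucD: "Ck (Suc n) S f \<Longrightarrow> Ck n S f"
  by (induction n arbitrary: f) (simp_all add: differentiable_imp_continuous_on)

lemma Ck_subset: "Ck n S f \<Longrightarrow> T \<subseteq> S \<Longrightarrow> Ck n T f"
  by (induction n arbitrary: f) (auto intro: continuous_on_subset differentiable_on_subset)

lemma Ck_imp_has_derivative:
  "Ck (Suc n) S f \<Longrightarrow> open S \<Longrightarrow> x \<in> S \<Longrightarrow> (f has_derivative frechet_derivative f (at x)) (at x)"
  by (simp add: differentiable_on_eq_differentiable_at frechet_derivative_works)

lemma frechet_derivative_transform_open:
  assumes "open S" "x \<in> S" "\<And>y. y \<in> S \<Longrightarrow> f y = h y"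
  shows "frechet_derivative f (at x) = frechet_derivative h (at x)"
proof -
  have "(f has_derivative D) (at x) \<longleftrightarrow> (h has_derivative D) (at x)" for D
    using assms has_derivative_transform_within_open by metis
  then show ?thesis
    unfolding frechet_derivative_def by simp
qed

lemma frechet_derivative_diff:
  assumes "f differentiable (at x)" "h differentiable (at x)"
  shows "frechet_derivative (\<lambda>y. f y - h y) (at x) v = frechet_derivative f (at x) v - frechet_derivative h (at x) v"
  using has_derivative_diff[OF assms[unfolded frechet_derivative_works]] frechet_derivative_at by metis

lemma Ck_transform_open:
  assumes "open S" "\<And>x. x \<in> S \<Longrightarrow> f x = h x" "Ck n S f"
  shows "Ck n S h"
  using assms(2,3)
proof (induction n arbitrary: f h)
  case 0
  then show ?case
    using continuous_on_eq[of S f h] by simp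
next
  case (Suc n)
  have "(h has_derivative frechet_derivative f (at x)) (at x)" if "x \<in> S" for x
    using has_derivative_transform_within_open[OF Ck_imp_has_derivative[OF Suc.prems(2) assms(1) that]
        assms(1) that Suc.prems(1)] by simp
  then have "h differentiable_on S"
    by (blast intro: differentiable_at_imp_differentiable_on differentiableI)
  moreover have "Ck n S (\<lambda>x. frechet_derivative h (at x) v)" for v
  proof (rule Suc.IH)
    show "frechet_derivative f (at x) v = frechet_derivative h (at x) v" if "x \<in> S" for x
      using frechet_derivative_transform_open[OF assms(1) that Suc.prems(1)] by simp
    show "Ck n S (\<lambda>x. frechet_derivative f (at x) v)"
      using Suc.prems(2) by simp
  qed
  ultimately show ?case
    by simp
qed

lemma Ck_SucI:
  assumes "open S" "\<And>x. x \<in> S \<Longrightarrow> (f has_derivative D x) (at x)" "\<And>v. Ck n S (\<lambda>x. D x v)"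
  shows "Ck (Suc n) S f"
proof -
  have "f differentiable_on S"
    using assms(2) by (blast intro: differentiable_at_imp_differentiable_on differentiableI)
  moreover have "Ck n S (\<lambda>x. frechet_derivative f (at x) v)" for v
    by (rule Ck_transform_open[OF assms(1) _ assms(3)]) (simp add: frechet_derivative_at[OF assms(2)])
  ultimately show ?thesis
    by simp
qed

lemma Ck_const: "open S \<Longrightarrow> Ck n S (\<lambda>x. c)"
proof (induction n arbitrary: c)
  case (Suc n)
  then show ?case
    by (intro Ck_SucI[where D = "\<lambda>x v. 0"]) auto
qed simp

lemma Ck_add:
  assumes "open S" "Ck n S f" "Ck n S h"
  shows "Ck n S (\<lambda>x. f x + h x)"
  using assms(2,3)
proof (induction n arbitrary: f h)
  case 0
  then show ?case
    by (simp add: continuous_on_add)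
next
  case (Suc n)
  show ?case
  proof (rule Ck_SucI[OF assms(1)])
    show "((\<lambda>x. f x + h x) has_derivative
        (\<lambda>v. frechet_derivative f (at x) v + frechet_derivative h (at x) v)) (at x)" if "x \<in> S" for x
      using Ck_imp_has_derivative[OF Suc.prems(1) assms(1) that]
        Ck_imp_has_derivative[OF Suc.prems(2) assms(1) that] by (rule has_derivative_add)
    show "Ck n S (\<lambda>x. frechet_derivative f (at x) v + frechet_derivative h (at x) v)" for v
      using Suc by simp
  qed
qed

lemma Ck_scaleR:
  fixes f :: "'a::real_normed_vector \<Rightarrow> real"
  assumes "open S" "Ck n S f" "Ck n S h"
  shows "Ck n S (\<lambda>x. f x *\<^sub>R h x)"
  using assms(2,3)
proof (induction n arbitrary: f h)
  case 0
  then show ?case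
    by (simp add: continuous_on_scaleR)
next
  case (Suc n)
  show ?case
  proof (rule Ck_SucI[OF assms(1)])
    show "((\<lambda>x. f x *\<^sub>R h x) has_derivative (\<lambda>v. f x *\<^sub>R frechet_derivative h (at x) v
        + frechet_derivative f (at x) v *\<^sub>R h x)) (at x)" if "x \<in> S" for x
      using Ck_imp_has_derivative[OF Suc.prems(1) assms(1) that]
        Ck_imp_has_derivative[OF Suc.prems(2) assms(1) that] by (rule has_derivative_scaleR)
    show "Ck n S (\<lambda>x. f x *\<^sub>R frechet_derivative h (at x) v + frechet_derivative f (at x) v *\<^sub>R h x)" for v
    proof -
      have "Ck n S f" "Ck n S h"
        using Suc.prems Ck_SucD by blast+
      then show ?thesis
        using Suc.IH[of f "\<lambda>x. frechet_derivative h (at x) v"]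
          Suc.IH[of "\<lambda>x. frechet_derivative f (at x) v" h] Suc.prems Ck_add[OF assms(1)]
        by simp
    qed
  qed
qed

lemma Ck_mult:
  fixes f h :: "'a::real_normed_vector \<Rightarrow> real"
  shows "open S \<Longrightarrow> Ck n S f \<Longrightarrow> Ck n S h \<Longrightarrow> Ck n S (\<lambda>x. f x * h x)"
  using Ck_scaleR[of S n f h] by simp

lemma Ck_power:
  fixes f :: "'a::real_normed_vector \<Rightarrow> real"
  assumes "open S" "Ck n S f"
  shows "Ck n S (\<lambda>x. f x ^ k)"
proof (induction k)
  case 0
  show ?case
    using Ck_const[OF assms(1)] by simp
next
  case (Suc k)
  show ?case
    using Ck_mult[OF assms Suc.IH] by simp
qed

lemma Ck_sum:
  assumes "open S" "finite I" "\<And>i. i \<in> I \<Longrightarrow> Ck n S (f i)"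
  shows "Ck n S (\<lambda>x. \<Sum>i\<in>I. f i x)"
  using assms(2,3)
proof (induction I rule: finite_induct)
  case empty
  show ?case
    using Ck_const[OF assms(1)] by simp
next
  case (insert i I)
  then show ?case
    using Ck_add[OF assms(1), of n "f i" "\<lambda>x. \<Sum>i\<in>I. f i x"] by simp
qed

lemma Ck_bounded_linear:
  assumes "open S" "bounded_linear L"
  shows "Ck n S L"
proof (cases n)
  case 0
  then show ?thesis
    using linear_continuous_on[OF assms(2)] by simp
next
  case (Suc m)
  show ?thesis
    unfolding Suc
    by (rule Ck_SucI[OF assms(1) bounded_linear_imp_has_derivative[OF assms(2)] Ck_const[OF assms(1)]])
qed

lemma Ck_compose_bounded_linear:
  assumes "Ck n UNIV f" "bounded_linear L"
  shows "Ck n UNIV (\<lambda>x. f (L x))"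
  using assms(1)
proof (induction n arbitrary: f)
  case 0
  then show ?case
    using continuous_on_compose2[of UNIV f UNIV L] linear_continuous_on[OF assms(2)] by simp
next
  case (Suc n)
  show ?case
  proof (rule Ck_SucI[OF open_UNIV])
    show "((\<lambda>x. f (L x)) has_derivative (\<lambda>v. frechet_derivative f (at (L x)) (L v))) (at x)" for x
      by (rule has_derivative_compose[OF bounded_linear_imp_has_derivative[OF assms(2)]
            Ck_imp_has_derivative[OF Suc.prems open_UNIV UNIV_I]])
    show "Ck n UNIV (\<lambda>x. frechet_derivative f (at (L x)) (L v))" for v
      by (rule Suc.IH) (use Suc.prems in simp)
  qed
qed

lemma frechet_derivative_real:
  fixes \<psi> :: "real \<Rightarrow> real"
  assumes "\<psi> differentiable (at t)"
  shows "frechet_derivative \<psi> (at t) = (\<lambda>h. deriv \<psi> t * h)"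
  using assms DERIV_deriv_iff_real_differentiable frechet_derivative_at
  unfolding has_field_derivative_def by metis

lemma smooth_on_UNIV_imp_Ck: "smooth_on UNIV f \<Longrightarrow> Ck n UNIV f"
  by (simp add: smooth_on_def)

lemma smooth_on_UNIV_has_real_derivative:
  fixes \<psi> :: "real \<Rightarrow> real"
  assumes "smooth_on UNIV \<psi>"
  shows "(\<psi> has_real_derivative deriv \<psi> t) (at t)"
  using smooth_on_UNIV_imp_Ck[OF assms, of 1]
  by (simp add: DERIV_deriv_iff_real_differentiable differentiable_on_eq_differentiable_at)

lemma smooth_on_UNIV_deriv:
  fixes \<psi> :: "real \<Rightarrow> real"
  assumes "smooth_on UNIV \<psi>"
  shows "smooth_on UNIV (deriv \<psi>)"
  unfolding smooth_on_def
proof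
  fix n
  have "Ck n UNIV (\<lambda>t. frechet_derivative \<psi> (at t) 1)"
    using smooth_on_UNIV_imp_Ck[OF assms, of "Suc n"] by simp
  moreover have "frechet_derivative \<psi> (at t) 1 = deriv \<psi> t" for t
    using smooth_on_UNIV_has_real_derivative[OF assms] frechet_derivative_real
    by (simp add: DERIV_deriv_iff_real_differentiable)
  ultimately show "Ck n UNIV (deriv \<psi>)"
    by simp
qed

lemma smooth_on_UNIV_derivs_bounded:
  fixes \<psi> :: "real \<Rightarrow> real"
  assumes "smooth_on UNIV \<psi>" "compact S"
  obtains M where "0 \<le> M" "\<And>t. t \<in> S \<Longrightarrow> \<bar>\<psi> t\<bar> + \<bar>deriv \<psi> t\<bar> + \<bar>deriv (deriv \<psi>) t\<bar> \<le> M"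
proof -
  have cont: "continuous_on S f" if "smooth_on UNIV f" for f :: "real \<Rightarrow> real"
    by (rule continuous_on_subset[OF _ subset_UNIV]) (use smooth_on_UNIV_imp_Ck[OF that, of 0] in simp)
  have "continuous_on S (\<lambda>t. \<bar>\<psi> t\<bar> + \<bar>deriv \<psi> t\<bar> + \<bar>deriv (deriv \<psi>) t\<bar>)"
    using assms(1) smooth_on_UNIV_deriv
    by (intro continuous_on_add continuous_on_rabs cont) blast+
  then obtain M where "0 \<le> M" "\<And>t. t \<in> S \<Longrightarrow> norm (\<bar>\<psi> t\<bar> + \<bar>deriv \<psi> t\<bar> + \<bar>deriv (deriv \<psi>) t\<bar>) \<le> M"
    using continuous_on_compact_bound[OF assms(2)] by blast
  then show ?thesis
    using that by simp
qed

lemma dd_conv_frechet: "dd v f = (\<lambda>x. frechet_derivative f (at x) v)"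
  by (simp add: dd_def fun_eq_iff)

section \<open>Quadratic maps of the plane\<close>

lemma Ck_poly_map_deg2:
  assumes "poly_map_deg2 P"
  shows "Ck n UNIV P"
proof -
  obtain c where P: "P = (\<lambda>x. \<Sum>j\<le>2. \<Sum>k\<le>2 - j. (fst x ^ j * snd x ^ k) *\<^sub>R c j k)"
    using assms unfolding poly_map_deg2_def by blast
  have "Ck n UNIV (\<lambda>x::real \<times> real. (fst x ^ j * snd x ^ k) *\<^sub>R c j k)" for j k
    by (intro Ck_scaleR Ck_mult Ck_power Ck_const Ck_bounded_linear bounded_linear_fst bounded_linear_snd
        open_UNIV)
  then show ?thesis
    unfolding P by (intro Ck_sum open_UNIV finite_atMost)
qed

lemma continuous_on_dd_poly_map_deg2:
  assumes "poly_map_deg2 P"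
  shows "continuous_on S (dd v P)"
proof -
  have "continuous_on UNIV (dd v P)"
    using Ck_poly_map_deg2[OF assms, of 1] by (simp add: dd_conv_frechet del: split_paired_All)
  then show ?thesis
    by (rule continuous_on_subset) simp
qed

lemma poly_map_deg2_taylor_fst:
  assumes "poly_map_deg2 P"
  shows "\<exists>C. \<forall>s y. P (s, y) = P (0, y) + s *\<^sub>R dd (1, 0) P (0, y) + s\<^sup>2 *\<^sub>R C"
proof -
  obtain c where "P = (\<lambda>x. \<Sum>j\<le>2. \<Sum>k\<le>2 - j. (fst x ^ j * snd x ^ k) *\<^sub>R c j k)"
    using assms unfolding poly_map_deg2_def by blast
  then have P: "P = (\<lambda>x. c 0 0 + snd x *\<^sub>R c 0 1 + (snd x)\<^sup>2 *\<^sub>R c 0 2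
      + fst x *\<^sub>R c 1 0 + (fst x * snd x) *\<^sub>R c 1 1 + (fst x)\<^sup>2 *\<^sub>R c 2 0)"
    by (simp add: numeral_2_eq_2 algebra_simps)
  have DP: "(P has_derivative (\<lambda>v. fst v *\<^sub>R (c 1 0 + y *\<^sub>R c 1 1) + snd v *\<^sub>R c 0 1
      + (2 * y * snd v) *\<^sub>R c 0 2)) (at (0, y))" for y
    unfolding P by (auto intro!: derivative_eq_intros simp: algebra_simps)
  have "dd (1, 0) P (0, y) = c 1 0 + y *\<^sub>R c 1 1" for y
    unfolding dd_def frechet_derivative_at[OF DP[of y], symmetric] by simp
  then have "P (s, y) = P (0, y) + s *\<^sub>R dd (1, 0) P (0, y) + s\<^sup>2 *\<^sub>R c 2 0" for s y
    unfolding P by (simp add: algebra_simps)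
  then show ?thesis
    by blast
qed

section \<open>The jump across the interface\<close>

lemma continuous_on_eq_on_closure:
  fixes f h :: "'a::topological_space \<Rightarrow> 'b::real_normed_vector"
  assumes "continuous_on S f" "continuous_on S h" "A \<subseteq> S" "\<And>y. y \<in> A \<Longrightarrow> f y = h y"
    and "x \<in> S" "x \<in> closure A"
  shows "f x = h x"
proof -
  have "closedin (top_of_set S) {y \<in> S. f y - h y = 0}"
    by (intro continuous_closedin_preimage_constant continuous_on_diff assms(1,2))
  then obtain C where C: "closed C" "{y \<in> S. f y - h y = 0} = S \<inter> C"
    by (auto simp: closedin_closed)
  then have "A \<subseteq> C"
    using assms(3,4) by auto
  then have "x \<in> C"
    using closure_minimal[OF _ C(1)] assms(6) by blast
  then show ?thesis
    using C(2) assms(5) by auto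
qed

lemma open_Qminus: "open Qminus"
  unfolding Qminus_def by (intro open_Times open_greaterThanLessThan)

lemma open_Qplus: "open Qplus"
  unfolding Qplus_def by (intro open_Times open_greaterThanLessThan)

lemma Qminus_Qplus_subset_Square: "Qminus \<union> Qplus \<subseteq> Square"
  unfolding Qminus_def Qplus_def Square_def by auto

lemma interface_in_closure:
  assumes "(0, y) \<in> Square"
  shows "(0, y) \<in> closure Qminus" "(0, y) \<in> closure Qplus"
  using assms unfolding Square_def Qminus_def Qplus_def by (simp_all add: closure_Times)

lemma interface_values_agree:
  fixes f P :: "real \<times> real \<Rightarrow> 'b::real_normed_vector"
  assumes "continuous_on Square f" "continuous_on UNIV P" "\<And>x. x \<in> Q \<Longrightarrow> f x = P x"
    and "Q = Qminus \<or> Q = Qplus" "(0, y) \<in> Square"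
  shows "f (0, y) = P (0, y)"
proof (rule continuous_on_eq_on_closure[OF assms(1) continuous_on_subset[OF assms(2) subset_UNIV]])
  show "Q \<subseteq> Square" "(0, y) \<in> closure Q"
    using assms(4,5) Qminus_Qplus_subset_Square interface_in_closure by auto
qed (use assms(3,5) in auto)

lemma C1_gluing_jump:
  assumes Pm: "poly_map_deg2 Pm" and Pp: "poly_map_deg2 Pp"
    and gm: "\<forall>x\<in>Qminus. g x = Pm x" and gp: "\<forall>x\<in>Qplus. g x = Pp x"
    and gC1: "Ck 1 Square g"
  shows "\<exists>b. \<forall>x\<in>Square. Pp x = Pm x + (fst x)\<^sup>2 *\<^sub>R b"
proof -
  obtain Cm where Cm: "\<And>s y. Pm (s, y) = Pm (0, y) + s *\<^sub>R dd (1, 0) Pm (0, y) + s\<^sup>2 *\<^sub>R Cm"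
    using poly_map_deg2_taylor_fst[OF Pm] by blast
  obtain Cp where Cp: "\<And>s y. Pp (s, y) = Pp (0, y) + s *\<^sub>R dd (1, 0) Pp (0, y) + s\<^sup>2 *\<^sub>R Cp"
    using poly_map_deg2_taylor_fst[OF Pp] by blast
  have P_cont: "continuous_on UNIV P" "continuous_on UNIV (dd (1, 0) P)" if "poly_map_deg2 P" for P
    using Ck_poly_map_deg2[OF that, of 0] continuous_on_dd_poly_map_deg2[OF that] by simp_all
  have g_cont: "continuous_on Square g" "continuous_on Square (dd (1, 0) g)"
    using gC1 by (simp_all add: dd_conv_frechet differentiable_imp_continuous_on)
  have dd_g: "dd (1, 0) g x = dd (1, 0) P x" if "open Q" "x \<in> Q" "\<forall>x\<in>Q. g x = P x" for P Q x
    using frechet_derivative_transform_open[OF that(1,2), of g P] that(3) by (simp add: dd_def)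
  have "Pp x = Pm x + (fst x)\<^sup>2 *\<^sub>R (Cp - Cm)" if "x \<in> Square" for x
  proof -
    obtain s y where x: "x = (s, y)"
      by fastforce
    have y: "(0, y) \<in> Square"
      using that unfolding x Square_def by simp
    have "Pm (0, y) = Pp (0, y)"
      using interface_values_agree[OF g_cont(1) P_cont(1)[OF Pm] _ _ y]
        interface_values_agree[OF g_cont(1) P_cont(1)[OF Pp] _ _ y] gm gp by metis
    moreover have "dd (1, 0) Pm (0, y) = dd (1, 0) Pp (0, y)"
      using interface_values_agree[OF g_cont(2) P_cont(2)[OF Pm] _ _ y]
        interface_values_agree[OF g_cont(2) P_cont(2)[OF Pp] _ _ y]
        dd_g[OF open_Qminus _ gm] dd_g[OF open_Qplus _ gp] by metis
    ultimately show ?thesis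
      unfolding x using Cm[of s y] Cp[of s y] by (simp add: algebra_simps)
  qed
  then show ?thesis
    by blast
qed

section \<open>Rescaled profiles and their jets\<close>

definition jump_profile :: "(real \<Rightarrow> real) \<Rightarrow> real \<Rightarrow> real \<Rightarrow> real" where
  "jump_profile \<eta> c t = (\<eta> t - c) * t\<^sup>2"

lemma smooth_on_jump_profile:
  assumes "smooth_on UNIV \<eta>"
  shows "smooth_on UNIV (jump_profile \<eta> c)"
  unfolding smooth_on_def
proof
  fix n
  have "Ck n UNIV (\<lambda>t. (\<eta> t + - c) * t ^ 2)"
    by (rule Ck_mult[OF open_UNIV Ck_add[OF open_UNIV smooth_on_UNIV_imp_Ck[OF assms] Ck_const[OF open_UNIV]]
          Ck_power[OF open_UNIV Ck_bounded_linear[OF open_UNIV bounded_linear_ident]]])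
  then show "Ck n UNIV (jump_profile \<eta> c)"
    by (simp add: jump_profile_def[abs_def])
qed

lemma has_derivative_scaled_profile:
  fixes \<psi> :: "real \<Rightarrow> real" and x :: "real \<times> 'c::real_normed_vector" and b :: "'b::real_normed_vector"
  assumes "(\<psi> has_real_derivative D) (at (fst x / \<epsilon>))"
  shows "((\<lambda>y. (a * \<psi> (fst y / \<epsilon>)) *\<^sub>R b) has_derivative (\<lambda>v. (a / \<epsilon> * D * fst v) *\<^sub>R b)) (at x)"
proof -
  have "((\<lambda>y. fst y / \<epsilon>) has_derivative (\<lambda>v. fst v / \<epsilon>)) (at x)"
    by (rule bounded_linear_imp_has_derivative bounded_linear_compose[OF bounded_linear_divide
          bounded_linear_fst])+
  then have "((\<lambda>y. \<psi> (fst y / \<epsilon>)) has_derivative (\<lambda>v. D * (fst v / \<epsilon>))) (at x)"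
    using has_derivative_compose assms unfolding has_field_derivative_def by fastforce
  then have "((\<lambda>y. (a * \<psi> (fst y / \<epsilon>)) *\<^sub>R b) has_derivative (\<lambda>v. (a * (D * (fst v / \<epsilon>))) *\<^sub>R b)) (at x)"
    by (intro has_derivative_scaleR_left has_derivative_mult_right)
  then show ?thesis
    by (rule has_derivative_eq_rhs) (simp add: fun_eq_iff divide_inverse mult_ac)
qed

text \<open>\<open>fst_jet f b x a\<^sub>0 a\<^sub>1 a\<^sub>2\<close>: up to second order at \<open>x\<close>, \<open>f\<close> agrees with the map
  \<open>y \<mapsto> (a\<^sub>0 + a\<^sub>1 (y\<^sub>1 - x\<^sub>1) + a\<^sub>2 (y\<^sub>1 - x\<^sub>1)\<^sup>2 / 2) b\<close>.\<close>
definition fst_jet :: "(real \<times> real \<Rightarrow> 'b::real_normed_vector) \<Rightarrow> 'b \<Rightarrow> real \<times> real \<Rightarrow> real \<Rightarrow> real \<Rightarrow> real \<Rightarrow> bool" where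
  "fst_jet f b x a0 a1 a2 \<longleftrightarrow> f x = a0 *\<^sub>R b \<and> (\<forall>i. dd i f x = (a1 * fst i) *\<^sub>R b)
     \<and> (\<forall>i j. dd j (dd i f) x = (a2 * fst i * fst j) *\<^sub>R b)"

lemma fst_jet_transform_open:
  assumes "open K" "x \<in> K" "\<And>y. y \<in> K \<Longrightarrow> f y = h y" "fst_jet h b x a0 a1 a2"
  shows "fst_jet f b x a0 a1 a2"
proof -
  have dd_eq: "dd i f y = dd i h y" if "y \<in> K" for i y
    using frechet_derivative_transform_open[OF assms(1) that assms(3)] by (simp add: dd_def)
  have "frechet_derivative (dd i f) (at x) = frechet_derivative (dd i h) (at x)" for i
    by (rule frechet_derivative_transform_open[OF assms(1,2) dd_eq])
  then have "dd j (dd i f) x = dd j (dd i h) x" for i j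
    by (simp add: dd_def)
  then show ?thesis
    using assms(2-4) dd_eq unfolding fst_jet_def by simp
qed

lemma fst_jet_zero: "fst_jet (\<lambda>y. 0) b x 0 0 0"
  by (simp add: fst_jet_def dd_conv_frechet)

lemma fst_jet_scaled_profile:
  fixes b :: "'b::real_normed_vector"
  assumes "smooth_on UNIV \<psi>" "\<epsilon> \<noteq> 0"
  shows "fst_jet (\<lambda>y. (\<epsilon>\<^sup>2 * \<psi> (fst y / \<epsilon>)) *\<^sub>R b) b x
    (\<epsilon>\<^sup>2 * \<psi> (fst x / \<epsilon>)) (\<epsilon> * deriv \<psi> (fst x / \<epsilon>)) (deriv (deriv \<psi>) (fst x / \<epsilon>))"
proof -
  define F :: "real \<times> real \<Rightarrow> 'b" where "F y = (\<epsilon>\<^sup>2 * \<psi> (fst y / \<epsilon>)) *\<^sub>R b" for y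
  have D1: "dd i F y = ((\<epsilon> * fst i) * deriv \<psi> (fst y / \<epsilon>)) *\<^sub>R b" for i y
  proof -
    have D: "(F has_derivative (\<lambda>v. (\<epsilon>\<^sup>2 / \<epsilon> * deriv \<psi> (fst y / \<epsilon>) * fst v) *\<^sub>R b)) (at y)"
      unfolding F_def[abs_def]
      by (rule has_derivative_scaled_profile[OF smooth_on_UNIV_has_real_derivative[OF assms(1)]])
    show ?thesis
      unfolding dd_def frechet_derivative_at[OF D, symmetric]
      using assms(2) by (simp add: power2_eq_square mult_ac)
  qed
  have D2: "dd j (dd i F) x = (fst i * deriv (deriv \<psi>) (fst x / \<epsilon>) * fst j) *\<^sub>R b" for i j
  proof -
    have D: "(dd i F has_derivative
        (\<lambda>v. ((\<epsilon> * fst i) / \<epsilon> * deriv (deriv \<psi>) (fst x / \<epsilon>) * fst v) *\<^sub>R b)) (at x)"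
      unfolding D1[abs_def]
      by (rule has_derivative_scaled_profile[OF smooth_on_UNIV_has_real_derivative[OF
            smooth_on_UNIV_deriv[OF assms(1)]]])
    show ?thesis
      unfolding dd_def[of j] frechet_derivative_at[OF D, symmetric]
      using assms(2) by (simp add: mult_ac)
  qed
  show ?thesis
    unfolding fst_jet_def F_def[symmetric] using D1 D2 by (simp add: F_def mult_ac)
qed

section \<open>The regularisation\<close>

lemma jdet_add_fst_scaleR:
  "jdet (\<lambda>v. L v + (a * fst v) *\<^sub>R b) = jdet L + a * (fst b * snd (L (0, 1)) - snd b * fst (L (0, 1)))"
  by (simp add: jdet_def algebra_simps)

lemma nn_integral_strip_le:
  fixes F :: "real \<times> real \<Rightarrow> real"
  assumes "U \<subseteq> UNIV \<times> {-1..1}" "0 \<le> K" "0 \<le> \<epsilon>"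
    and "\<And>x. x \<in> U \<Longrightarrow> F x \<le> (if \<bar>fst x\<bar> \<le> \<epsilon> then K else 0)"
  shows "(\<integral>\<^sup>+x\<in>U. ennreal (F x) \<partial>lborel) \<le> ennreal (4 * K * \<epsilon>)"
proof -
  define S where "S = cbox (-\<epsilon>, -1) (\<epsilon>, 1::real)"
  have "ennreal (F x) * indicator U x \<le> ennreal K * indicator S x" for x
  proof (cases "x \<in> U \<and> \<bar>fst x\<bar> \<le> \<epsilon>")
    case True
    then have "x \<in> S"
      using assms(1) by (cases x) (auto simp: S_def cbox_Pair_iff)
    then show ?thesis
      using True assms(4)[of x] by (simp add: ennreal_leI)
  next
    case False
    then have "ennreal (F x) * indicator U x = 0"
      using assms(4)[of x] by (cases "x \<in> U") (simp_all add: ennreal_eq_0_iff)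
    then show ?thesis
      by (metis zero_le)
  qed
  then have "(\<integral>\<^sup>+x\<in>U. ennreal (F x) \<partial>lborel) \<le> (\<integral>\<^sup>+x. ennreal K * indicator S x \<partial>lborel)"
    by (rule nn_integral_mono)
  also have "\<dots> = ennreal K * emeasure lborel S"
    by (simp add: S_def nn_integral_cmult_indicator)
  also have "emeasure lborel S = ennreal (4 * \<epsilon>)"
    using assms(3) by (simp add: S_def emeasure_lborel_cbox_eq Basis_prod_def inner_prod_def)
  finally show ?thesis
    using assms(2,3) by (simp add: ennreal_mult' mult_ac)
qed

lemma g_eps_eq_off_strip: "\<epsilon> \<le> \<bar>fst x\<bar> \<Longrightarrow> g_eps \<eta> Pm Pp g \<epsilon> x = g x"
  by (simp add: g_eps_def)

lemma fst_jet_g_eps_off_strip: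
  assumes "\<epsilon> < \<bar>fst x\<bar>"
  shows "fst_jet (\<lambda>y. g_eps \<eta> Pm Pp g \<epsilon> y - g y) b x 0 0 0"
proof (rule fst_jet_transform_open[OF _ _ _ fst_jet_zero])
  show "open {y :: real \<times> real. \<epsilon> < \<bar>fst y\<bar>}"
    by (intro open_Collect_less continuous_intros)
qed (use assms g_eps_eq_off_strip in auto)

locale glued_quadratics =
  fixes g Pm Pp :: "real \<times> real \<Rightarrow> real \<times> real" and \<eta> :: "real \<Rightarrow> real" and b :: "real \<times> real"
  assumes Pm: "poly_map_deg2 Pm" and Pp: "poly_map_deg2 Pp"
    and gm: "\<forall>x\<in>Qminus. g x = Pm x" and gp: "\<forall>x\<in>Qplus. g x = Pp x"
    and jump: "\<forall>x\<in>Square. Pp x = Pm x + (fst x)\<^sup>2 *\<^sub>R b"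
    and eta: "smooth_on UNIV \<eta>" and eta0: "\<forall>t\<le>-1. \<eta> t = 0" and eta1: "\<forall>t\<ge>1. \<eta> t = 1"
begin

lemma g_eps_eq:
  assumes "0 < \<epsilon>" "x \<in> Qminus \<union> Qplus"
  shows "g_eps \<eta> Pm Pp g \<epsilon> x = Pm x + (\<eta> (fst x / \<epsilon>) * (fst x)\<^sup>2) *\<^sub>R b"
proof (cases "\<bar>fst x\<bar> < \<epsilon>")
  case True
  then show ?thesis
    using assms(2) jump Qminus_Qplus_subset_Square by (auto simp: g_eps_def)
next
  case off_strip: False
  show ?thesis
  proof (cases "x \<in> Qminus")
    case True
    then have "fst x / \<epsilon> \<le> -1"
      using off_strip assms(1) by (auto simp: Qminus_def divide_le_eq)
    then show ?thesis
      using off_strip True gm eta0 by (simp add: g_eps_def)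
  next
    case False
    then have "x \<in> Qplus" "x \<in> Square"
      using assms(2) Qminus_Qplus_subset_Square by auto
    moreover have "1 \<le> fst x / \<epsilon>"
      using off_strip \<open>x \<in> Qplus\<close> assms(1) by (auto simp: Qplus_def le_divide_eq)
    ultimately show ?thesis
      using off_strip gp jump eta1 by (simp add: g_eps_def)
  qed
qed

lemma smooth_on_g_eps:
  assumes "0 < \<epsilon>"
  shows "smooth_on (Qminus \<union> Qplus) (g_eps \<eta> Pm Pp g \<epsilon>)"
  unfolding smooth_on_def
proof
  fix n
  have "Ck n UNIV (\<lambda>y. \<eta> (fst y / \<epsilon>))"
    by (rule Ck_compose_bounded_linear[OF smooth_on_UNIV_imp_Ck[OF eta]
          bounded_linear_compose[OF bounded_linear_divide bounded_linear_fst]])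
  moreover have "Ck n UNIV (fst :: real \<times> real \<Rightarrow> real)"
    by (rule Ck_bounded_linear[OF open_UNIV bounded_linear_fst])
  ultimately have "Ck n UNIV (\<lambda>y. Pm y + (\<eta> (fst y / \<epsilon>) * (fst y)\<^sup>2) *\<^sub>R b)"
    by (intro Ck_add[OF open_UNIV Ck_poly_map_deg2[OF Pm]] Ck_scaleR[OF open_UNIV _ Ck_const[OF open_UNIV]]
        Ck_mult[OF open_UNIV] Ck_power[OF open_UNIV])
  then have "Ck n (Qminus \<union> Qplus) (\<lambda>y. Pm y + (\<eta> (fst y / \<epsilon>) * (fst y)\<^sup>2) *\<^sub>R b)"
    by (rule Ck_subset) simp
  then show "Ck n (Qminus \<union> Qplus) (g_eps \<eta> Pm Pp g \<epsilon>)"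
    by (rule Ck_transform_open[OF open_Un[OF open_Qminus open_Qplus], rotated]) (simp add: g_eps_eq[OF assms])
qed

lemma g_eps_minus_g_local:
  assumes "0 < \<epsilon>" "x \<in> Qminus \<union> Qplus"
  obtains K c where "open K" "x \<in> K" "c \<in> {0, 1}"
    "\<And>y. y \<in> K \<Longrightarrow> g_eps \<eta> Pm Pp g \<epsilon> y - g y = (\<epsilon>\<^sup>2 * jump_profile \<eta> c (fst y / \<epsilon>)) *\<^sub>R b"
proof -
  have rescale: "(\<eta> (fst y / \<epsilon>) - c) * (fst y)\<^sup>2 = \<epsilon>\<^sup>2 * jump_profile \<eta> c (fst y / \<epsilon>)" for y c
    using assms(1) by (simp add: jump_profile_def power_divide)
  show ?thesis
  proof (cases "x \<in> Qminus")
    case True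
    have "g_eps \<eta> Pm Pp g \<epsilon> y - g y = (\<epsilon>\<^sup>2 * jump_profile \<eta> 0 (fst y / \<epsilon>)) *\<^sub>R b"
      if "y \<in> Qminus" for y
      using g_eps_eq[OF assms(1)] gm that rescale[of y 0] by simp
    then show ?thesis
      by (rule that[OF open_Qminus True insertI1])
  next
    case False
    then have x: "x \<in> Qplus"
      using assms(2) by blast
    have "g_eps \<eta> Pm Pp g \<epsilon> y - g y = (\<epsilon>\<^sup>2 * jump_profile \<eta> 1 (fst y / \<epsilon>)) *\<^sub>R b"
      if "y \<in> Qplus" for y
      using g_eps_eq[OF assms(1)] gp jump Qminus_Qplus_subset_Square that rescale[of y 1]
      by (auto simp: algebra_simps)
    then show ?thesis
      by (rule that[OF open_Qplus x insertI2[OF insertI1]])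
  qed
qed

definition correction_jet_le :: "real \<Rightarrow> real \<Rightarrow> real \<times> real \<Rightarrow> bool" where
  "correction_jet_le M \<epsilon> x \<longleftrightarrow> (\<exists>a0 a1 a2. fst_jet (\<lambda>y. g_eps \<eta> Pm Pp g \<epsilon> y - g y) b x a0 a1 a2
     \<and> \<bar>a0\<bar> \<le> M * \<epsilon>\<^sup>2 \<and> \<bar>a1\<bar> \<le> M * \<epsilon> \<and> \<bar>a2\<bar> \<le> M
     \<and> (\<epsilon> < \<bar>fst x\<bar> \<longrightarrow> a0 = 0 \<and> a1 = 0 \<and> a2 = 0))"

lemma correction_jet_bounded:
  obtains M where "0 \<le> M" "\<And>\<epsilon> x. 0 < \<epsilon> \<Longrightarrow> x \<in> Qminus \<union> Qplus \<Longrightarrow> correction_jet_le M \<epsilon> x"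
proof -
  define \<psi> where "\<psi> = jump_profile \<eta>"
  have smooth: "smooth_on UNIV (\<psi> c)" for c
    unfolding \<psi>_def by (rule smooth_on_jump_profile[OF eta])
  obtain M0 M1 where M0: "0 \<le> M0" "\<And>t. t \<in> {-1..1} \<Longrightarrow> \<bar>\<psi> 0 t\<bar> + \<bar>deriv (\<psi> 0) t\<bar> + \<bar>deriv (deriv (\<psi> 0)) t\<bar> \<le> M0"
    and M1: "\<And>t. t \<in> {-1..1} \<Longrightarrow> \<bar>\<psi> 1 t\<bar> + \<bar>deriv (\<psi> 1) t\<bar> + \<bar>deriv (deriv (\<psi> 1)) t\<bar> \<le> M1"
    using smooth_on_UNIV_derivs_bounded[OF smooth compact_Icc] by metis
  define M where "M = max M0 M1"
  have bound: "\<bar>\<psi> c t\<bar> \<le> M" "\<bar>deriv (\<psi> c) t\<bar> \<le> M" "\<bar>deriv (deriv (\<psi> c)) t\<bar> \<le> M"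
    if "c \<in> {0, 1}" "t \<in> {-1..1}" for c t
    using that M0(2)[OF that(2)] M1[OF that(2)] unfolding M_def by auto
  show ?thesis
  proof (rule that)
    show "0 \<le> M"
      using M0(1) by (simp add: M_def)
    fix \<epsilon> :: real and x
    assume \<epsilon>: "0 < \<epsilon>" and x: "x \<in> Qminus \<union> Qplus"
    show "correction_jet_le M \<epsilon> x"
    proof (cases "\<epsilon> < \<bar>fst x\<bar>")
      case True
      then show ?thesis
        using fst_jet_g_eps_off_strip[OF True] M0(1) \<epsilon> unfolding correction_jet_le_def M_def
        by (intro exI[where x = 0]) simp
    next
      case False
      obtain K c where K: "open K" "x \<in> K" "c \<in> {0, 1}"
        and diff: "\<And>y. y \<in> K \<Longrightarrow> g_eps \<eta> Pm Pp g \<epsilon> y - g y = (\<epsilon>\<^sup>2 * \<psi> c (fst y / \<epsilon>)) *\<^sub>R b"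
        using g_eps_minus_g_local[OF \<epsilon> x] unfolding \<psi>_def by blast
      define t where "t = fst x / \<epsilon>"
      have "\<bar>t\<bar> \<le> 1"
        using False \<epsilon> by (simp add: t_def abs_divide divide_le_eq)
      then have t: "t \<in> {-1..1}"
        by (simp add: abs_le_iff)
      have "fst_jet (\<lambda>y. g_eps \<eta> Pm Pp g \<epsilon> y - g y) b x
          (\<epsilon>\<^sup>2 * \<psi> c t) (\<epsilon> * deriv (\<psi> c) t) (deriv (deriv (\<psi> c)) t)"
        unfolding t_def using \<epsilon> diff
        by (intro fst_jet_transform_open[OF K(1,2) _ fst_jet_scaled_profile[OF smooth]]) auto
      moreover have "\<bar>\<epsilon>\<^sup>2 * \<psi> c t\<bar> \<le> M * \<epsilon>\<^sup>2" "\<bar>\<epsilon> * deriv (\<psi> c) t\<bar> \<le> M * \<epsilon>"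
        using bound(1,2)[OF K(3) t] \<epsilon> by (simp_all add: abs_mult mult.commute mult_left_mono)
      ultimately show ?thesis
        using False bound(3)[OF K(3) t] unfolding correction_jet_le_def
        by (intro exI[of _ "\<epsilon>\<^sup>2 * \<psi> c t"] exI[of _ "\<epsilon> * deriv (\<psi> c) t"]
            exI[of _ "deriv (deriv (\<psi> c)) t"]) simp
    qed
  qed
qed

lemma frechet_derivative_g:
  assumes "x \<in> Qminus \<union> Qplus"
  shows "frechet_derivative g (at x) = frechet_derivative Pm (at x)
    \<or> frechet_derivative g (at x) = frechet_derivative Pp (at x)"
  using assms frechet_derivative_transform_open[OF open_Qminus, of x g Pm]
    frechet_derivative_transform_open[OF open_Qplus, of x g Pp] gm gp by blast

lemma g_differentiable:
  assumes "x \<in> Qminus \<union> Qplus"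
  shows "g differentiable (at x)"
proof -
  have "g differentiable (at x)" if "open Q" "x \<in> Q" "\<forall>y\<in>Q. g y = P y" "poly_map_deg2 P" for Q P
    by (rule differentiableI[OF has_derivative_transform_within_open[OF
          Ck_imp_has_derivative[OF Ck_poly_map_deg2[OF that(4)] open_UNIV UNIV_I] that(1,2)]])
      (simp add: that(3))
  then show ?thesis
    using assms open_Qminus open_Qplus gm gp Pm Pp by blast
qed

lemma frechet_derivative_g_eps:
  assumes "0 < \<epsilon>" "x \<in> Qminus \<union> Qplus" "fst_jet (\<lambda>y. g_eps \<eta> Pm Pp g \<epsilon> y - g y) b x a0 a1 a2"
  shows "frechet_derivative (g_eps \<eta> Pm Pp g \<epsilon>) (at x) = (\<lambda>v. frechet_derivative g (at x) v + (a1 * fst v) *\<^sub>R b)"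
proof -
  have "Ck (Suc 0) (Qminus \<union> Qplus) (g_eps \<eta> Pm Pp g \<epsilon>)"
    using smooth_on_g_eps[OF assms(1)] unfolding smooth_on_def by blast
  then have "g_eps \<eta> Pm Pp g \<epsilon> differentiable (at x)"
    by (rule differentiableI[OF Ck_imp_has_derivative[OF _ open_Un[OF open_Qminus open_Qplus] assms(2)]])
  moreover have "dd v (\<lambda>y. g_eps \<eta> Pm Pp g \<epsilon> y - g y) x = (a1 * fst v) *\<^sub>R b" for v
    using assms(3) unfolding fst_jet_def by blast
  ultimately have "frechet_derivative (g_eps \<eta> Pm Pp g \<epsilon>) (at x) v - frechet_derivative g (at x) v
      = (a1 * fst v) *\<^sub>R b" for v
    using frechet_derivative_diff[OF _ g_differentiable[OF assms(2)]] unfolding dd_def by metis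
  then show ?thesis
    by (intro ext) (metis add.commute diff_add_cancel)
qed

lemma cross_term_bounded:
  obtains B where "0 \<le> B" "\<And>x. x \<in> Qminus \<union> Qplus \<Longrightarrow>
    \<bar>fst b * snd (frechet_derivative g (at x) (0, 1)) - snd b * fst (frechet_derivative g (at x) (0, 1))\<bar> \<le> B"
proof -
  define \<kappa> where "\<kappa> (P :: real \<times> real \<Rightarrow> real \<times> real) x = fst b * snd (dd (0, 1) P x) - snd b * fst (dd (0, 1) P x)" for P x
  define R :: "(real \<times> real) set" where "R = cbox (-1, -1) (1, 1)"
  have "\<exists>B. 0 \<le> B \<and> (\<forall>x\<in>R. \<bar>\<kappa> P x\<bar> \<le> B)" if "poly_map_deg2 P" for P
  proof -
    have "compact R"
      by (simp add: R_def)
    moreover have "continuous_on R (\<kappa> P)"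
      unfolding \<kappa>_def by (intro continuous_intros continuous_on_dd_poly_map_deg2[OF that])
    ultimately obtain B where "0 \<le> B" "\<And>x. x \<in> R \<Longrightarrow> norm (\<kappa> P x) \<le> B"
      using continuous_on_compact_bound by blast
    then show ?thesis
      by auto
  qed
  then obtain Bm Bp where Bm: "0 \<le> Bm" "\<And>x. x \<in> R \<Longrightarrow> \<bar>\<kappa> Pm x\<bar> \<le> Bm"
    and Bp: "0 \<le> Bp" "\<And>x. x \<in> R \<Longrightarrow> \<bar>\<kappa> Pp x\<bar> \<le> Bp"
    using Pm Pp by meson
  show ?thesis
  proof (rule that[of "max Bm Bp"])
    show "0 \<le> max Bm Bp"
      using Bm(1) by simp
    fix x
    assume x: "x \<in> Qminus \<union> Qplus"
    then have "x \<in> R"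
      by (auto simp: R_def Qminus_def Qplus_def cbox_Pair_iff)
    from frechet_derivative_g[OF x]
    show "\<bar>fst b * snd (frechet_derivative g (at x) (0, 1)) - snd b * fst (frechet_derivative g (at x) (0, 1))\<bar>
        \<le> max Bm Bp"
    proof
      assume "frechet_derivative g (at x) = frechet_derivative Pm (at x)"
      then show ?thesis
        using Bm(2)[OF \<open>x \<in> R\<close>] by (simp add: \<kappa>_def dd_def)
    next
      assume "frechet_derivative g (at x) = frechet_derivative Pp (at x)"
      then show ?thesis
        using Bp(2)[OF \<open>x \<in> R\<close>] by (simp add: \<kappa>_def dd_def)
    qed
  qed
qed

lemma W21_dist_g_eps_tendsto:
  "((\<lambda>\<epsilon>. W21_dist (Qminus \<union> Qplus) (g_eps \<eta> Pm Pp g \<epsilon>) g) \<longlongrightarrow> 0) (at_right 0)"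
proof -
  obtain M where "0 \<le> M"
    and jet: "\<And>\<epsilon> x. 0 < \<epsilon> \<Longrightarrow> x \<in> Qminus \<union> Qplus \<Longrightarrow> correction_jet_le M \<epsilon> x"
    using correction_jet_bounded by blast
  define K where "K = 3 * M * norm b"
  have W21_le: "W21_dist (Qminus \<union> Qplus) (g_eps \<eta> Pm Pp g \<epsilon>) g \<le> ennreal (4 * K * \<epsilon>)"
    if \<epsilon>: "0 < \<epsilon>" "\<epsilon> < 1" for \<epsilon>
    unfolding W21_dist_def
  proof (rule nn_integral_strip_le)
    show "Qminus \<union> Qplus \<subseteq> UNIV \<times> {-1..1}"
      by (auto simp: Qminus_def Qplus_def)
    show "0 \<le> K" "0 \<le> \<epsilon>"
      using \<open>0 \<le> M\<close> \<epsilon> by (simp_all add: K_def)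
    fix x
    assume "x \<in> Qminus \<union> Qplus"
    then obtain a0 a1 a2 where a: "fst_jet (\<lambda>y. g_eps \<eta> Pm Pp g \<epsilon> y - g y) b x a0 a1 a2"
      "\<bar>a0\<bar> \<le> M * \<epsilon>\<^sup>2" "\<bar>a1\<bar> \<le> M * \<epsilon>" "\<bar>a2\<bar> \<le> M"
      "\<epsilon> < \<bar>fst x\<bar> \<longrightarrow> a0 = 0 \<and> a1 = 0 \<and> a2 = 0"
      using jet[OF \<epsilon>(1)] unfolding correction_jet_le_def by blast
    have "M * \<epsilon>\<^sup>2 \<le> M" "M * \<epsilon> \<le> M"
      using \<open>0 \<le> M\<close> \<epsilon> by (simp_all add: mult_left_le power_le_one)
    then have "\<bar>a0\<bar> + \<bar>a1\<bar> + \<bar>a2\<bar> \<le> 3 * M"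
      using a(2-4) by linarith
    then have "(\<bar>a0\<bar> + \<bar>a1\<bar> + \<bar>a2\<bar>) * norm b \<le> (if \<bar>fst x\<bar> \<le> \<epsilon> then K else 0)"
      using a(5) mult_right_mono[OF _ norm_ge_zero, of _ "3 * M" b] by (auto simp: K_def)
    moreover have "norm (g_eps \<eta> Pm Pp g \<epsilon> x - g x)
        + (\<Sum>i\<in>Basis. norm (dd i (\<lambda>y. g_eps \<eta> Pm Pp g \<epsilon> y - g y) x))
        + (\<Sum>i\<in>Basis. \<Sum>j\<in>Basis. norm (dd j (dd i (\<lambda>y. g_eps \<eta> Pm Pp g \<epsilon> y - g y)) x))
        = (\<bar>a0\<bar> + \<bar>a1\<bar> + \<bar>a2\<bar>) * norm b"
      using a(1) by (simp add: fst_jet_def Basis_prod_def algebra_simps)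
    ultimately show "norm (g_eps \<eta> Pm Pp g \<epsilon> x - g x)
        + (\<Sum>i\<in>Basis. norm (dd i (\<lambda>y. g_eps \<eta> Pm Pp g \<epsilon> y - g y) x))
        + (\<Sum>i\<in>Basis. \<Sum>j\<in>Basis. norm (dd j (dd i (\<lambda>y. g_eps \<eta> Pm Pp g \<epsilon> y - g y)) x))
        \<le> (if \<bar>fst x\<bar> \<le> \<epsilon> then K else 0)"
      by simp
  qed
  have "((\<lambda>\<epsilon>. ennreal (4 * K * \<epsilon>)) \<longlongrightarrow> ennreal (4 * K * 0)) (at_right 0)"
    by (intro tendsto_ennrealI tendsto_intros)
  then have lim: "((\<lambda>\<epsilon>. ennreal (4 * K * \<epsilon>)) \<longlongrightarrow> 0) (at_right 0)"
    by simp
  have le: "\<forall>\<^sub>F \<epsilon> in at_right 0. W21_dist (Qminus \<union> Qplus) (g_eps \<eta> Pm Pp g \<epsilon>) g \<le> ennreal (4 * K * \<epsilon>)"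
    by (rule eventually_at_rightI[of 0 1]) (simp_all add: W21_le)
  show ?thesis
    by (rule tendsto_sandwich[OF _ le tendsto_const lim]) simp
qed

lemma onorm_frechet_derivative_g_eps_le:
  obtains C where "\<And>\<epsilon> x. 0 < \<epsilon> \<Longrightarrow> x \<in> Qminus \<union> Qplus \<Longrightarrow>
    onorm (\<lambda>v. frechet_derivative (g_eps \<eta> Pm Pp g \<epsilon>) (at x) v - frechet_derivative g (at x) v) \<le> C * \<epsilon>"
proof -
  obtain M where jet: "\<And>\<epsilon> x. 0 < \<epsilon> \<Longrightarrow> x \<in> Qminus \<union> Qplus \<Longrightarrow> correction_jet_le M \<epsilon> x"
    using correction_jet_bounded by metis
  show ?thesis
  proof (rule that[of "M * norm b"])
    fix \<epsilon> :: real and x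
    assume \<epsilon>: "0 < \<epsilon>" and x: "x \<in> Qminus \<union> Qplus"
    obtain a0 a1 a2 where a: "fst_jet (\<lambda>y. g_eps \<eta> Pm Pp g \<epsilon> y - g y) b x a0 a1 a2"
      "\<bar>a1\<bar> \<le> M * \<epsilon>"
      using jet[OF \<epsilon> x] unfolding correction_jet_le_def by blast
    have "onorm (\<lambda>v. frechet_derivative (g_eps \<eta> Pm Pp g \<epsilon>) (at x) v - frechet_derivative g (at x) v)
        = onorm (\<lambda>v :: real \<times> real. (a1 * fst v) *\<^sub>R b)"
      by (simp add: frechet_derivative_g_eps[OF \<epsilon> x a(1)])
    also have "\<dots> \<le> M * norm b * \<epsilon>"
    proof (rule onorm_le)
      fix v :: "real \<times> real"
      have "\<bar>fst v\<bar> \<le> norm v"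
        using norm_fst_le[of "fst v" "snd v"] by simp
      then have "\<bar>a1\<bar> * \<bar>fst v\<bar> * norm b \<le> (M * \<epsilon>) * norm v * norm b"
        using a(2) by (intro mult_right_mono mult_mono) auto
      then show "norm ((a1 * fst v) *\<^sub>R b) \<le> M * norm b * \<epsilon> * norm v"
        by (simp add: abs_mult mult_ac)
    qed
    finally show "onorm (\<lambda>v. frechet_derivative (g_eps \<eta> Pm Pp g \<epsilon>) (at x) v - frechet_derivative g (at x) v)
        \<le> M * norm b * \<epsilon>" .
  qed
qed

text \<open>The correction changes only the first column of the Jacobian, by \<open>a\<^sub>1 b\<close> with
  \<open>a\<^sub>1 = O(\<epsilon>)\<close>, so the determinant moves by \<open>a\<^sub>1\<close> times a uniformly bounded cross term.\<close>
lemma jdet_frechet_derivative_g_eps_ge: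
  assumes lam: "0 < lam" and det: "\<And>x. x \<in> Qminus \<union> Qplus \<Longrightarrow> lam \<le> jdet (frechet_derivative g (at x))"
  shows "\<forall>\<^sub>F \<epsilon> in at_right 0. \<forall>x\<in>Qminus \<union> Qplus. lam / 2 \<le> jdet (frechet_derivative (g_eps \<eta> Pm Pp g \<epsilon>) (at x))"
proof -
  obtain M where "0 \<le> M"
    and jet: "\<And>\<epsilon> x. 0 < \<epsilon> \<Longrightarrow> x \<in> Qminus \<union> Qplus \<Longrightarrow> correction_jet_le M \<epsilon> x"
    using correction_jet_bounded by blast
  obtain B where "0 \<le> B" and cross: "\<And>x. x \<in> Qminus \<union> Qplus \<Longrightarrow>
    \<bar>fst b * snd (frechet_derivative g (at x) (0, 1)) - snd b * fst (frechet_derivative g (at x) (0, 1))\<bar> \<le> B"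
    using cross_term_bounded by blast
  define \<delta> where "\<delta> = lam / (2 * (M * B + 1))"
  have MB: "0 < M * B + 1"
    using mult_nonneg_nonneg[OF \<open>0 \<le> M\<close> \<open>0 \<le> B\<close>] by linarith
  then have "0 < \<delta>"
    using lam by (simp add: \<delta>_def)
  have "lam / 2 \<le> jdet (frechet_derivative (g_eps \<eta> Pm Pp g \<epsilon>) (at x))"
    if \<epsilon>: "0 < \<epsilon>" "\<epsilon> < \<delta>" and x: "x \<in> Qminus \<union> Qplus" for \<epsilon> x
  proof -
    obtain a0 a1 a2 where a: "fst_jet (\<lambda>y. g_eps \<eta> Pm Pp g \<epsilon> y - g y) b x a0 a1 a2" "\<bar>a1\<bar> \<le> M * \<epsilon>"
      using jet[OF \<epsilon>(1) x] unfolding correction_jet_le_def by blast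
    define L where "L = frechet_derivative g (at x)"
    define k where "k = fst b * snd (L (0, 1)) - snd b * fst (L (0, 1))"
    have "jdet (frechet_derivative (g_eps \<eta> Pm Pp g \<epsilon>) (at x)) = jdet L + a1 * k"
      unfolding frechet_derivative_g_eps[OF \<epsilon>(1) x a(1)] L_def[symmetric] k_def
      by (rule jdet_add_fst_scaleR)
    moreover have "\<bar>a1 * k\<bar> \<le> (M * \<epsilon>) * B"
      unfolding abs_mult using a(2) cross[OF x] \<open>0 \<le> M\<close> \<epsilon>(1)
      by (intro mult_mono) (simp_all add: k_def L_def)
    moreover have "(M * \<epsilon>) * B \<le> lam / 2"
    proof -
      have "(M * \<epsilon>) * B \<le> (M * B + 1) * \<epsilon>"
        using \<epsilon>(1) by (simp add: algebra_simps)
      also have "\<dots> \<le> (M * B + 1) * \<delta>"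
        using \<epsilon>(2) MB by (intro mult_left_mono) simp_all
      also have "\<dots> = lam / 2"
        using MB by (simp add: \<delta>_def field_simps)
      finally show ?thesis .
    qed
    moreover have "lam \<le> jdet L"
      using det[OF x] by (simp add: L_def)
    ultimately show ?thesis
      by linarith
  qed
  then show ?thesis
    by (intro eventually_at_rightI[OF _ \<open>0 < \<delta>\<close>]) auto
qed

end

theorem proposition3p2:
  fixes g Pm Pp :: "real \<times> real \<Rightarrow> real \<times> real"
    and \<eta> :: "real \<Rightarrow> real" and lam :: real
  assumes Pm: "poly_map_deg2 Pm" and Pp: "poly_map_deg2 Pp"
    and gm: "\<forall>x\<in>Qminus. g x = Pm x" and gp: "\<forall>x\<in>Qplus. g x = Pp x"
    and gC1: "Ck 1 Square g"
    and lam: "lam > 0"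
    and det: "\<forall>x\<in>Qminus \<union> Qplus. jdet (frechet_derivative g (at x)) \<ge> lam"
    and eta: "smooth_on (UNIV :: real set) \<eta>"
    and eta0: "\<forall>t\<le>-1. \<eta> t = 0" and eta1: "\<forall>t\<ge>1. \<eta> t = 1"
  shows "(\<forall>\<epsilon>. 0 < \<epsilon> \<and> \<epsilon> < 1 \<longrightarrow> smooth_on (Qminus \<union> Qplus) (g_eps \<eta> Pm Pp g \<epsilon>))
    \<and> (\<forall>\<epsilon>. 0 < \<epsilon> \<and> \<epsilon> < 1 \<longrightarrow>
          (\<forall>x\<in>Qminus \<union> Qplus. \<bar>fst x\<bar> \<ge> \<epsilon> \<longrightarrow> g_eps \<eta> Pm Pp g \<epsilon> x = g x))
    \<and> ((\<lambda>\<epsilon>. W21_dist (Qminus \<union> Qplus) (g_eps \<eta> Pm Pp g \<epsilon>) g) \<longlongrightarrow> 0) (at_right 0)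
    \<and> (\<exists>C. \<forall>\<epsilon>. 0 < \<epsilon> \<and> \<epsilon> < 1 \<longrightarrow> (\<forall>x\<in>Qminus \<union> Qplus.
          onorm (\<lambda>v. frechet_derivative (g_eps \<eta> Pm Pp g \<epsilon>) (at x) v
                      - frechet_derivative g (at x) v) \<le> C * \<epsilon>))
    \<and> (\<forall>\<^sub>F \<epsilon> in at_right 0. \<forall>x\<in>Qminus \<union> Qplus.
          jdet (frechet_derivative (g_eps \<eta> Pm Pp g \<epsilon>) (at x)) \<ge> lam / 2)"
proof -
  obtain b where "\<forall>x\<in>Square. Pp x = Pm x + (fst x)\<^sup>2 *\<^sub>R b"
    using C1_gluing_jump[OF Pm Pp gm gp gC1] by blast
  then interpret glued_quadratics g Pm Pp \<eta> b
    using Pm Pp gm gp eta eta0 eta1 by unfold_locales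
  obtain C where C: "\<And>\<epsilon> x. 0 < \<epsilon> \<Longrightarrow> x \<in> Qminus \<union> Qplus \<Longrightarrow>
      onorm (\<lambda>v. frechet_derivative (g_eps \<eta> Pm Pp g \<epsilon>) (at x) v - frechet_derivative g (at x) v) \<le> C * \<epsilon>"
    using onorm_frechet_derivative_g_eps_le by blast
  show ?thesis
  proof (intro conjI)
    show "\<forall>\<epsilon>. 0 < \<epsilon> \<and> \<epsilon> < 1 \<longrightarrow> smooth_on (Qminus \<union> Qplus) (g_eps \<eta> Pm Pp g \<epsilon>)"
      using smooth_on_g_eps by blast
    show "\<forall>\<epsilon>. 0 < \<epsilon> \<and> \<epsilon> < 1 \<longrightarrow>
        (\<forall>x\<in>Qminus \<union> Qplus. \<epsilon> \<le> \<bar>fst x\<bar> \<longrightarrow> g_eps \<eta> Pm Pp g \<epsilon> x = g x)"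
      using g_eps_eq_off_strip by blast
    show "((\<lambda>\<epsilon>. W21_dist (Qminus \<union> Qplus) (g_eps \<eta> Pm Pp g \<epsilon>) g) \<longlongrightarrow> 0) (at_right 0)"
      by (rule W21_dist_g_eps_tendsto)
    show "\<exists>C. \<forall>\<epsilon>. 0 < \<epsilon> \<and> \<epsilon> < 1 \<longrightarrow> (\<forall>x\<in>Qminus \<union> Qplus.
        onorm (\<lambda>v. frechet_derivative (g_eps \<eta> Pm Pp g \<epsilon>) (at x) v - frechet_derivative g (at x) v) \<le> C * \<epsilon>)"
      using C by blast
    show "\<forall>\<^sub>F \<epsilon> in at_right 0. \<forall>x\<in>Qminus \<union> Qplus.
        lam / 2 \<le> jdet (frechet_derivative (g_eps \<eta> Pm Pp g \<epsilon>) (at x))"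
      using jdet_frechet_derivative_g_eps_ge[OF lam] det by blast
  qed
qed

end
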